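(* For every automaton $\mathcal{A}$ and every integer $k\ge1$, the language $\mathfrak{J}_{\exists\boxplus}(\mathcal{A})$ is $k\boxplus$-invariant: if $w\in\mathfrak{J}_{\exists\boxplus}(\mathcal{A})$ and $w_1\sim_{k\boxplus}w$, then $w_1\in\mathfrak{J}_{\exists\boxplus}(\mathcal{A})$. Consequently, the $\omega$-regular language $\{(ab)^\omega\}$ over $\{a,b\}$ is not equal to $\mathfrak{J}_{\exists\boxplus}(\mathcal{B})$ for any automaton $\mathcal{B}$.
   Context: Automata are nondeterministic B\"uchi automata over infinite words; $\mathfrak{L}(\mathcal{A})$ is the accepted language. For finite $x$, $\Psi(x)$ is its Parikh image. For $k\ge1$, $w\sim_{k\boxplus}w'$ means $w=x_1x_2\cdots$, $w'=y_1y_2\cdots$ with $|x_i|=|y_i|=k$ and $\Psi(x_i)=\Psi(y_i)$ for all $i$. $\mathfrak{J}_{\exists\boxplus}(\mathcal{A})=\{w\in\Sigma^\omega:\exists k\ge1\ \exists w'\sim_{k\boxplus}w,\ w'\in\mathfrak{L}(\mathcal{A})\}$. *)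

theory Defs
  imports Main "HOL-Library.Multiset"
begin

record ('q, 'a) nba =
  alphabet :: "'a set"
  states :: "'q set"
  initial :: "'q set"
  trans :: "('q \<times> 'a \<times> 'q) set"
  accepting :: "'q set"

definition nba :: "('q, 'a) nba \<Rightarrow> bool" where
  "nba A \<longleftrightarrow> finite (alphabet A) \<and> alphabet A \<noteq> {} \<and> finite (states A)
     \<and> initial A \<subseteq> states A \<and> accepting A \<subseteq> states A
     \<and> trans A \<subseteq> states A \<times> alphabet A \<times> states A"

definition omega_words :: "'a set \<Rightarrow> (nat \<Rightarrow> 'a) set" where
  "omega_words S = {w. \<forall>i. w i \<in> S}"

definition accepting_run :: "('q, 'a) nba \<Rightarrow> (nat \<Rightarrow> 'a) \<Rightarrow> (nat \<Rightarrow> 'q) \<Rightarrow> bool" where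
  "accepting_run A w r \<longleftrightarrow> r 0 \<in> initial A
     \<and> (\<forall>i. (r i, w i, r (Suc i)) \<in> trans A)
     \<and> (\<exists>\<^sub>\<infinity> i. r i \<in> accepting A)"

definition lang :: "('q, 'a) nba \<Rightarrow> (nat \<Rightarrow> 'a) set" where
  "lang A = {w \<in> omega_words (alphabet A). \<exists>r. accepting_run A w r}"

definition parikh :: "'a list \<Rightarrow> 'a multiset" where
  "parikh x = mset x"

definition block :: "nat \<Rightarrow> (nat \<Rightarrow> 'a) \<Rightarrow> nat \<Rightarrow> 'a list" where
  "block k w i = map w [i * k..<(Suc i) * k]"

definition block_equiv :: "nat \<Rightarrow> (nat \<Rightarrow> 'a) \<Rightarrow> (nat \<Rightarrow> 'a) \<Rightarrow> bool" where
  "block_equiv k w w' \<longleftrightarrow> (\<forall>i. parikh (block k w i) = parikh (block k w' i))"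

definition J_exists_block :: "('q, 'a) nba \<Rightarrow> (nat \<Rightarrow> 'a) set" where
  "J_exists_block A = {w \<in> omega_words (alphabet A).
      \<exists>k\<ge>1. \<exists>w'. block_equiv k w' w \<and> w' \<in> lang A}"

end

theory Submission
  imports Defs
begin

text \<open>Two block-equivalences with block lengths k and k' can both be coarsened to block length
  k * k', because a block of length k * m is the concatenation of m blocks of length k and Parikh
  images are additive. Hence block-equivalence for some block length is transitive, and the
  existential closure of any language is invariant under every fixed block length. The alternating
  word (ab)^\<omega> is block-equivalent for block length 2 to (ba)^\<omega>, so no invariant language can be
  the singleton of the former.\<close>

lemma block_equiv_sym: "block_equiv k u v \<Longrightarrow> block_equiv k v u"
  unfolding block_equiv_def by simp

lemma block_equiv_trans: "block_equiv k u v \<Longrightarrow> block_equiv k v x \<Longrightarrow> block_equiv k u x"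
  unfolding block_equiv_def by simp

lemma block_equiv_mset_consecutive_blocks:
  assumes "block_equiv k u v"
  shows "mset (map u [j * k..<(j + n) * k]) = mset (map v [j * k..<(j + n) * k])"
proof (induction n)
  case 0
  then show ?case by simp
next
  case (Suc n)
  have split: "[j * k..<(j + Suc n) * k] = [j * k..<(j + n) * k] @ [(j + n) * k..<Suc (j + n) * k]"
    using upt_add_eq_append[of "j * k" "(j + n) * k" k] by (simp add: algebra_simps)
  have "mset (map u [(j + n) * k..<Suc (j + n) * k]) = mset (map v [(j + n) * k..<Suc (j + n) * k])"
    using assms unfolding block_equiv_def block_def parikh_def by blast
  with Suc.IH show ?case
    unfolding split by simp
qed

lemma block_equiv_mult:
  assumes "block_equiv k u v"
  shows "block_equiv (k * m) u v"
  unfolding block_equiv_def block_def parikh_def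
proof
  fix i
  have "[i * (k * m)..<Suc i * (k * m)] = [(i * m) * k..<(i * m + m) * k]"
    by (simp add: algebra_simps)
  then show "mset (map u [i * (k * m)..<Suc i * (k * m)]) = mset (map v [i * (k * m)..<Suc i * (k * m)])"
    using block_equiv_mset_consecutive_blocks[OF assms] by simp
qed

lemma block_equiv_range_subset:
  assumes "block_equiv k u v" and "k \<ge> 1"
  shows "range u \<subseteq> range v"
proof
  fix x assume "x \<in> range u"
  then obtain n where x: "x = u n" by blast
  let ?i = "n div k"
  have "n < Suc ?i * k"
    using assms(2) by (metis add.commute div_mult_mod_eq mod_less_divisor mult_Suc
        nat_add_left_cancel_less not_one_le_zero neq0_conv)
  then have "n \<in> set [?i * k..<Suc ?i * k]"
    by (simp add: div_times_less_eq_dividend)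
  then have "x \<in> set (block k u ?i)"
    unfolding x block_def by simp
  also have "set (block k u ?i) = set (block k v ?i)"
    using assms(1) unfolding block_equiv_def parikh_def by (metis set_mset_mset)
  finally show "x \<in> range v"
    unfolding block_def by auto
qed

lemma block_equiv_omega_words:
  assumes "block_equiv k u v" and "k \<ge> 1" and "v \<in> omega_words S"
  shows "u \<in> omega_words S"
proof -
  have "range v \<subseteq> S"
    using assms(3) unfolding omega_words_def by auto
  with block_equiv_range_subset[OF assms(1,2)] show ?thesis
    unfolding omega_words_def by auto
qed

lemma J_exists_block_invariant:
  assumes "k \<ge> 1" and "w \<in> J_exists_block A" and "block_equiv k w1 w"
  shows "w1 \<in> J_exists_block A"
proof -
  obtain k' w' where k': "k' \<ge> 1" "block_equiv k' w' w" "w' \<in> lang A"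
    and w: "w \<in> omega_words (alphabet A)"
    using assms(2) unfolding J_exists_block_def by blast
  have "block_equiv (k' * k) w' w"
    using block_equiv_mult[OF k'(2)] .
  moreover have "block_equiv (k' * k) w w1"
    using block_equiv_sym[OF block_equiv_mult[OF assms(3), of k']] by (simp only: mult.commute)
  ultimately have "block_equiv (k' * k) w' w1"
    by (rule block_equiv_trans)
  moreover have "k' * k \<ge> 1"
    using assms(1) k'(1) by simp
  moreover have "w1 \<in> omega_words (alphabet A)"
    using block_equiv_omega_words[OF assms(3,1) w] .
  ultimately show ?thesis
    using k'(3) unfolding J_exists_block_def by blast
qed

lemma block_equiv_alternating_swap:
  "block_equiv 2 (\<lambda>i. if even i then b else a) (\<lambda>i. if even i then a else b)"
  unfolding block_equiv_def block_def parikh_def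
proof
  fix i :: nat
  have "[i * 2..<Suc i * 2] = [2 * i, Suc (2 * i)]"
    by (simp add: upt_rec)
  then show "mset (map (\<lambda>i. if even i then b else a) [i * 2..<Suc i * 2])
           = mset (map (\<lambda>i. if even i then a else b) [i * 2..<Suc i * 2])"
    by simp
qed

lemma J_exists_block_ne_alternating:
  assumes "a \<noteq> b"
  shows "J_exists_block B \<noteq> {\<lambda>i. if even i then a else b}"
proof
  assume J: "J_exists_block B = {\<lambda>i. if even i then a else b}"
  then have "(\<lambda>i. if even i then b else a) \<in> J_exists_block B"
    using J_exists_block_invariant[OF _ _ block_equiv_alternating_swap[of b a], of B] by simp
  with J have "(\<lambda>i::nat. if even i then b else a) = (\<lambda>i. if even i then a else b)"
    by simp
  then have "b = a"
    by (metis (full_types) even_zero)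
  with assms show False by simp
qed

theorem mainTheorem15:
  shows "(\<forall>(A :: ('q, 'a) nba) (k :: nat) w w1.
            nba A \<longrightarrow> k \<ge> 1 \<longrightarrow> w \<in> J_exists_block A \<longrightarrow> block_equiv k w1 w
            \<longrightarrow> w1 \<in> J_exists_block A)
       \<and> (\<forall>(a :: 'a) b (B :: ('q, 'a) nba).
            a \<noteq> b \<longrightarrow> nba B \<longrightarrow> alphabet B = {a, b}
            \<longrightarrow> J_exists_block B \<noteq> {\<lambda>i. if even i then a else b})"
proof (intro conjI allI impI)
  fix A :: "('q, 'a) nba" and k :: nat and w w1
  assume "k \<ge> 1" "w \<in> J_exists_block A" "block_equiv k w1 w"
  then show "w1 \<in> J_exists_block A"
    by (rule J_exists_block_invariant)
next
  fix a b :: 'a and B :: "('q, 'a) nba"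
  assume "a \<noteq> b"
  then show "J_exists_block B \<noteq> {\<lambda>i. if even i then a else b}"
    by (rule J_exists_block_ne_alternating)
qed

end
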